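(* Fix $n\in\mathbb{N}$. If $0<U\le \frac{T}{\ln^2T}$ and $T$ is sufficiently large, then $$0<\varphi_1^k(T+U)-\varphi_1^k(T)<\frac{2k+1}{2n+1}\,\frac{T}{\ln T}\le\frac{T}{\ln T},\qquad k=1,\dots,n.$$
   Context: A Jacob's ladder is a function $\varphi_1(t)=\frac12\varphi(t)$, where $y=\varphi(T)$ is an arbitrary solution of the nonlinear integral equation $\int_0^{\mu[x(T)]}Z^2(t)e^{-\frac{2}{x(T)}t}\,{\rm d}t=\int_0^T Z^2(t)\,{\rm d}t$, with $Z(t)=e^{i\vartheta(t)}\zeta(\frac12+it)$, $\vartheta(t)=-\frac t2\ln\pi+\operatorname{Im}\ln\Gamma(\frac14+i\frac t2)$, $\mu(y)\ge 7y\ln y$. It is known that $\varphi_1$ is increasing for $t\ge T_0[\varphi_1]$ and satisfies $t-\varphi_1(t)\sim(1-c)\frac{t}{\ln t}$ as $t\to\infty$, where $c$ is Euler's constant. Iterates: $\varphi_1^0(t)=t$, $\varphi_1^{k+1}(t)=\varphi_1(\varphi_1^k(t))$. *)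

theory Defs
  imports "HOL-Analysis.Analysis" "HOL-Library.Landau_Symbols"
begin

text \<open>Riemann zeta function on the half-plane Re s > 0 (in particular on the critical
line), via the Dirichlet eta function:
  zeta s = (1 - 2^(1-s))^(-1) * sum_{n>=1} (-1)^(n-1) n^(-s).\<close>
definition zeta_crit :: "complex \<Rightarrow> complex" where
  "zeta_crit s = (\<Sum>n. (-1) ^ n * (of_nat (Suc n)) powr (- s)) / (1 - 2 powr (1 - s))"

definition rs_theta :: "real \<Rightarrow> real" where
  "rs_theta t = - (t / 2) * ln pi + Im (ln_Gamma (Complex (1/4) (t/2)))"

text \<open>Hardy's function Z(t) = e^{i theta(t)} zeta(1/2 + i t) (a real number).\<close>
definition hardy_Z :: "real \<Rightarrow> real" where
  "hardy_Z t = Re (exp (\<i> * of_real (rs_theta t)) * zeta_crit (Complex (1/2) t))"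

definition jacobs_ladder :: "(real \<Rightarrow> real) \<Rightarrow> bool" where
  "jacobs_ladder \<phi>\<^sub>1 \<longleftrightarrow>
     (\<exists>\<phi> \<mu> T\<^sub>0.
        \<phi>\<^sub>1 = (\<lambda>t. \<phi> t / 2) \<and>
        (\<forall>y>0. \<mu> y \<ge> 7 * y * ln y) \<and>
        (\<forall>T\<ge>T\<^sub>0. \<phi> T > 0 \<and>
           integral {0..\<mu> (\<phi> T)} (\<lambda>t. (hardy_Z t)\<^sup>2 * exp (- (2 / \<phi> T) * t))
             = integral {0..T} (\<lambda>t. (hardy_Z t)\<^sup>2)))"

end

theory Submission
  imports Defs
begin

(* Only two properties of the ladder enter: phi1 is strictly increasing
   for large t, and its displacement g(t) = t - phi1(t) is asymptotic to
   h(t) = c t / ln t with c = 1 - euler_mascheroni in (0,1].  Fix a small relative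
   error eps.  For t >= M the displacement is within eps*h(t) of h(t); hence
   t/2 <= phi1 t < t, so the iterates of T stay in the window [T/2^n, T+U].
   Writing a_k, b_k for the k-th iterates of T and T+U, monotonicity of h gives
     b_(k+1) - a_(k+1) = (b_k - a_k) + g(a_k) - g(b_k) <= (b_k - a_k) + 2 eps h(b_k),
   and on the window h is at most 4 T / ln T.  So the k-th gap is at most
   U + 8 k eps T / ln T, which for eps = 1/(16(n+1)(2n+1)) and U <= T/ln^2 T
   is below (2k+1)/(2n+1) * T / ln T once T is large.
   The file proves, in order: monotonicity of t / ln t and its size on the window;
   the abstract gap estimate for iterates of a map with controlled displacement;
   its specialisation to displacements close to c t / ln t; the extraction of the
   threshold M from the asymptotic hypothesis; the size of admissible shifts U;
   the numerical budget; and finally the theorem. *)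

text \<open>The function \<open>t / ln t\<close> is nondecreasing on \<open>[e, \<infinity>)\<close>; its derivative is
  \<open>(ln t - 1) / ln\<^sup>2 t\<close>.\<close>
lemma x_over_ln_mono:
  fixes a b :: real assumes "exp 1 \<le> a" "a \<le> b" shows "a / ln a \<le> b / ln b"
proof (rule DERIV_nonneg_imp_nondecreasing[OF assms(2)])
  fix x assume x: "a \<le> x" "x \<le> b"
  have xp: "x > 0" using x assms exp_gt_zero[of 1] by linarith
  have l1: "ln x \<ge> 1" using x assms xp by (metis ln_exp ln_le_cancel_iff exp_gt_zero order.trans)
  have "((\<lambda>x. x / ln x) has_real_derivative (ln x - 1) / (ln x)^2) (at x)"
    using xp l1 by (auto intro!: derivative_eq_intros simp: field_simps power2_eq_square)
  then show "\<exists>y. ((\<lambda>x. x / ln x) has_real_derivative y) (at x) \<and> 0 \<le> y"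
    using l1 by (intro exI[of _ "(ln x - 1) / (ln x)^2"]) auto
qed

lemma ln_lower_on_window:
  fixes T t :: real and n :: nat
  assumes T: "4 ^ n \<le> T" "1 < T" and t: "T / 2 ^ n \<le> t"
  shows "ln T / 2 \<le> ln t"
proof -
  have "ln T - n * ln 2 = ln (T / 2 ^ n)" using T by (simp add: ln_div ln_realpow)
  also have "\<dots> \<le> ln t" using T t by (subst ln_le_cancel_iff) (auto intro: less_le_trans[OF _ t])
  finally have "ln T - n * ln 2 \<le> ln t" .
  moreover have "n * ln 4 \<le> ln T"
    using ln_le_cancel_iff[of "4 ^ n" T] T by (simp add: ln_realpow)
  moreover have "ln (4::real) = 2 * ln 2" using ln_realpow[of 2 2] by simp
  ultimately show ?thesis by simp
qed

lemma x_over_ln_on_window: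
  fixes T t :: real and n :: nat
  assumes T: "4 ^ n \<le> T" "1 < T" and t: "T / 2 ^ n \<le> t" "t \<le> 2 * T"
  shows "t / ln t \<le> 4 * (T / ln T)"
proof -
  have lnT: "ln T > 0" using T by simp
  have "t / ln t \<le> (2 * T) / (ln T / 2)"
    using ln_lower_on_window[OF T t(1)] lnT t T by (intro frac_le) auto
  then show ?thesis by simp
qed

lemma iterates_gap:
  fixes f h :: "real \<Rightarrow> real" and M T U B \<epsilon> :: real and k n :: nat
  assumes mono: "strict_mono_on {M..} f"
    and range: "\<And>t. M \<le> t \<Longrightarrow> t / 2 \<le> f t \<and> f t < t"
    and dev: "\<And>t. M \<le> t \<Longrightarrow> \<bar>(t - f t) - h t\<bar> \<le> \<epsilon> * h t"
    and h_mono: "\<And>s t. M \<le> s \<Longrightarrow> s \<le> t \<Longrightarrow> h s \<le> h t"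
    and h_bound: "\<And>t. T / 2 ^ n \<le> t \<Longrightarrow> t \<le> T + U \<Longrightarrow> h t \<le> B"
    and M_le: "M \<le> T / 2 ^ n" and T: "0 \<le> T" and U: "0 < U" and \<epsilon>: "0 \<le> \<epsilon>"
    and k: "k \<le> n"
  shows "T / 2 ^ k \<le> (f ^^ k) T \<and> (f ^^ k) T < (f ^^ k) (T + U) \<and> (f ^^ k) (T + U) \<le> T + U
         \<and> (f ^^ k) (T + U) - (f ^^ k) T \<le> U + 2 * real k * \<epsilon> * B"
  using k
proof (induction k)
  case 0
  then show ?case using U by simp
next
  case (Suc k)
  define a b where "a = (f ^^ k) T" and "b = (f ^^ k) (T + U)"
  from Suc have IH: "T / 2 ^ k \<le> a" "a < b" "b \<le> T + U" "b - a \<le> U + 2 * real k * \<epsilon> * B"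
    unfolding a_def b_def by simp_all
  have "T / 2 ^ n \<le> T / 2 ^ k"
    using Suc.prems T by (intro divide_left_mono) (auto intro: power_increasing)
  then have window: "T / 2 ^ n \<le> a" using IH(1) by linarith
  then have aM: "M \<le> a" and bM: "M \<le> b" using M_le IH(2) by linarith+
  have h_ab: "h a \<le> h b" using h_mono[OF aM] IH(2) by simp
  have "b - f b - (a - f a) \<ge> (1 - \<epsilon>) * h b - (1 + \<epsilon>) * h a"
    using dev[OF aM] dev[OF bM] by (simp add: abs_le_iff algebra_simps)
  moreover have "\<epsilon> * h a \<le> \<epsilon> * h b" using h_ab \<epsilon> by (rule mult_left_mono)
  moreover have "\<epsilon> * h b \<le> \<epsilon> * B" using h_bound[of b] window IH \<epsilon> by (intro mult_left_mono) auto
  ultimately have "f b - f a \<le> (b - a) + 2 * \<epsilon> * B" using h_ab by (simp add: algebra_simps)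
  then have gap: "f b - f a \<le> U + 2 * real (Suc k) * \<epsilon> * B" using IH(4) by (simp add: algebra_simps)
  have "T / 2 ^ Suc k \<le> a / 2" using IH(1) by simp
  then have lower: "T / 2 ^ Suc k \<le> f a" using range[OF aM] by linarith
  have "f a < f b" using mono aM bM IH(2) by (simp add: strict_mono_on_def)
  then show ?case using lower gap range[OF bM] IH(3) by (simp add: a_def b_def)
qed

lemma iterates_gap_log_displacement:
  fixes f :: "real \<Rightarrow> real" and c \<epsilon> M T U :: real and k n :: nat
  assumes mono: "strict_mono_on {M..} f"
    and c: "0 < c" "c \<le> 1" and \<epsilon>: "0 \<le> \<epsilon>" "\<epsilon> < 1" and M: "exp 4 \<le> M"
    and dev: "\<And>t. M \<le> t \<Longrightarrow> \<bar>(t - f t) - c * t / ln t\<bar> \<le> \<epsilon> * (c * t / ln t)"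
    and T: "2 ^ n * M \<le> T" "4 ^ n \<le> T" and U: "0 < U" "U \<le> T" and k: "k \<le> n"
  shows "(f ^^ k) T < (f ^^ k) (T + U)
         \<and> (f ^^ k) (T + U) - (f ^^ k) T \<le> U + 8 * real k * \<epsilon> * (T / ln T)"
proof -
  have M_pos: "1 < M" using M by (smt (verit) one_less_exp_iff)
  have ln_ge_4: "4 \<le> ln t" if "M \<le> t" for t
  proof -
    have "ln (exp 4) \<le> ln t" using M M_pos that by (subst ln_le_cancel_iff) auto
    then show ?thesis by simp
  qed
  have h_le: "c * t / ln t \<le> t / ln t" if "M \<le> t" for t
    using c ln_ge_4[OF that] that M_pos by (intro divide_right_mono mult_left_le_one_le) auto
  have range: "t / 2 \<le> f t \<and> f t < t" if t: "M \<le> t" for t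
  proof -
    have pos: "0 < c * t / ln t" using c ln_ge_4[OF t] t M_pos by simp
    then have "\<epsilon> * (c * t / ln t) < 1 * (c * t / ln t)" by (rule mult_strict_right_mono[OF \<epsilon>(2)])
    moreover have "2 * (t / ln t) \<le> t / 2" using ln_ge_4[OF t] t M_pos by (simp add: field_simps)
    ultimately show ?thesis using dev[OF t] h_le[OF t] pos by (simp only: abs_le_iff) linarith
  qed
  have h_mono: "c * s / ln s \<le> c * t / ln t" if "M \<le> s" "s \<le> t" for s t
  proof -
    have "exp 1 \<le> s" using M that by (smt (verit) exp_less_cancel_iff)
    then have "c * (s / ln s) \<le> c * (t / ln t)"
      using x_over_ln_mono that(2) c by (intro mult_left_mono) auto
    then show ?thesis by simp
  qed
  have M_le: "M \<le> T / 2 ^ n" using T(1) by (simp add: field_simps)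
  have T1: "1 < T" using M_pos M_le T(1) one_le_power[of "2::real" n] by (smt (verit) mult_le_cancel_right1)
  have h_bound: "c * t / ln t \<le> 4 * (T / ln T)" if "T / 2 ^ n \<le> t" "t \<le> T + U" for t
    using h_le[of t] x_over_ln_on_window[OF T(2) T1, of t] that M_le U by simp
  from iterates_gap[OF mono range dev h_mono h_bound M_le _ U(1) \<epsilon>(1) k] T1
  show ?thesis by (simp add: algebra_simps)
qed

lemma gap_budget:
  fixes X U :: real and k n :: nat
  assumes X: "0 < X" and U: "U \<le> X / (2 * (2 * real n + 1))" and k: "k \<le> n"
  shows "U + 8 * real k * (1 / (16 * (real n + 1) * (2 * real n + 1))) * X
           < (2 * real k + 1) / (2 * real n + 1) * X"
proof -
  define D where "D = 2 * real n + 1"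
  have D: "0 < D" unfolding D_def by simp
  have "8 * real k / (16 * (real n + 1)) < 1 / 2" using k by (simp add: field_simps)
  then have "8 * real k / (16 * (real n + 1)) * (X / D) < 1 / 2 * (X / D)"
    using X D by (intro mult_strict_right_mono) auto
  moreover have "8 * real k * (1 / (16 * (real n + 1) * D)) * X = 8 * real k / (16 * (real n + 1)) * (X / D)"
    by simp
  moreover have "U \<le> 1 / 2 * (X / D)" using U unfolding D_def by simp
  moreover have "X / D \<le> (2 * real k + 1) / D * X" using X D by (simp add: field_simps)
  ultimately show ?thesis unfolding D_def[symmetric] by linarith
qed

lemma eventual_log_displacement:
  fixes f :: "real \<Rightarrow> real" and c \<epsilon> L :: real
  assumes asymp: "(\<lambda>t. t - f t) \<sim>[at_top] (\<lambda>t. c * t / ln t)" and c: "0 < c" and \<epsilon>: "0 < \<epsilon>"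
  obtains M where "exp 4 \<le> M" "L \<le> M"
    "\<And>t. M \<le> t \<Longrightarrow> \<bar>(t - f t) - c * t / ln t\<bar> \<le> \<epsilon> * (c * t / ln t)"
proof -
  have "\<forall>\<^sub>F t in at_top. exp 4 \<le> t \<and> L \<le> t \<and>
          \<bar>(t - f t) - c * t / ln t\<bar> \<le> \<epsilon> * (c * t / ln t)"
    using landau_o.smallD[OF asymp_equiv_imp_diff_smallo[OF asymp] \<epsilon>]
      eventually_ge_at_top[of "exp 4"] eventually_ge_at_top[of L]
  proof eventually_elim
    case (elim t)
    have "1 < t" using elim(2) by (smt (verit) one_less_exp_iff)
    then have "norm (c * t / ln t) = c * t / ln t" using c by simp
    then show ?case using elim by simp
  qed
  then show ?thesis
    using that unfolding eventually_at_top_linorder by (metis order.refl order.trans)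
qed

lemma shift_vs_T_over_ln:
  fixes T U m :: real
  assumes T: "0 < T" "m \<le> ln T" and m: "1 \<le> m" and U: "0 < U" "U \<le> T / (ln T)\<^sup>2"
  shows "0 < T / ln T" "U \<le> (T / ln T) / m" "U \<le> T"
proof -
  have lnT: "1 \<le> ln T" using T m by linarith
  then have T1: "1 < T" using T(1) ln_gt_zero_imp_gt_one[of T] by linarith
  then show X: "0 < T / ln T" using T lnT by simp
  have "U \<le> (T / ln T) / ln T" using U by (simp add: power2_eq_square)
  also have "\<dots> \<le> (T / ln T) / m" using T T1 m X by (intro divide_left_mono mult_pos_pos) auto
  finally show U_small: "U \<le> (T / ln T) / m" .
  also have "\<dots> \<le> T / 1"
    using T frac_le[of T T 1 "ln T"] lnT m by (intro frac_le) auto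
  finally show "U \<le> T" by simp
qed

theorem mainTheorem4:
  fixes \<phi>\<^sub>1 :: "real \<Rightarrow> real" and n :: nat and T\<^sub>0 :: real
  assumes ladder: "jacobs_ladder \<phi>\<^sub>1"
    and incr: "strict_mono_on {T\<^sub>0..} \<phi>\<^sub>1"
    and asymp: "(\<lambda>t. t - \<phi>\<^sub>1 t) \<sim>[at_top] (\<lambda>t. (1 - euler_mascheroni) * t / ln t)"
  shows "\<forall>\<^sub>F T in at_top. \<forall>U. 0 < U \<and> U \<le> T / (ln T)\<^sup>2 \<longrightarrow>
           (\<forall>k\<in>{1..n}.
              0 < (\<phi>\<^sub>1 ^^ k) (T + U) - (\<phi>\<^sub>1 ^^ k) T \<and>
              (\<phi>\<^sub>1 ^^ k) (T + U) - (\<phi>\<^sub>1 ^^ k) T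
                < (2 * real k + 1) / (2 * real n + 1) * (T / ln T) \<and>
              (2 * real k + 1) / (2 * real n + 1) * (T / ln T) \<le> T / ln T)"
proof -
  define \<epsilon> :: real where "\<epsilon> = 1 / (16 * (real n + 1) * (2 * real n + 1))"
  have c: "0 < 1 - (euler_mascheroni :: real)" "1 - (euler_mascheroni :: real) \<le> 1"
    using euler_mascheroni_less_13_over_22 euler_mascheroni_pos by auto
  have "16 * 1 * 1 \<le> 16 * (real n + 1) * (2 * real n + 1)" by (intro mult_mono) auto
  then have \<epsilon>: "0 < \<epsilon>" "\<epsilon> < 1" unfolding \<epsilon>_def by simp_all
  obtain M where M: "exp 4 \<le> M" "T\<^sub>0 \<le> M" and dev: "\<And>t. M \<le> t \<Longrightarrow>
      \<bar>(t - \<phi>\<^sub>1 t) - (1 - euler_mascheroni) * t / ln t\<bar> \<le> \<epsilon> * ((1 - euler_mascheroni) * t / ln t)"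
    using eventual_log_displacement[OF asymp c(1) \<epsilon>(1)] by blast
  have mono: "strict_mono_on {M..} \<phi>\<^sub>1" using monotone_on_subset[OF incr] M(2) by auto
  have "\<forall>\<^sub>F T in at_top. 2 ^ n * M \<le> T \<and> 4 ^ n \<le> T \<and> 2 * (2 * real n + 1) \<le> ln T"
    using eventually_ge_at_top[of "2 ^ n * M"] eventually_ge_at_top[of "4 ^ n"]
      filterlim_at_top[THEN iffD1, OF ln_at_top, rule_format, of "2 * (2 * real n + 1)"]
    by eventually_elim auto
  then show ?thesis
  proof (rule eventually_mono, intro allI impI ballI)
    fix T U :: real and k :: nat
    assume T: "2 ^ n * M \<le> T \<and> 4 ^ n \<le> T \<and> 2 * (2 * real n + 1) \<le> ln T"
      and U: "0 < U \<and> U \<le> T / (ln T)\<^sup>2" and k: "k \<in> {1..n}"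
    have "0 < T" using T one_le_power[of "4::real" n] by linarith
    then have X: "0 < T / ln T" "U \<le> (T / ln T) / (2 * (2 * real n + 1))" "U \<le> T"
      using shift_vs_T_over_ln[of T "2 * (2 * real n + 1)" U] T U by auto
    have "(\<phi>\<^sub>1 ^^ k) T < (\<phi>\<^sub>1 ^^ k) (T + U) \<and>
        (\<phi>\<^sub>1 ^^ k) (T + U) - (\<phi>\<^sub>1 ^^ k) T \<le> U + 8 * real k * \<epsilon> * (T / ln T)"
      using iterates_gap_log_displacement[OF mono c less_imp_le[OF \<epsilon>(1)] \<epsilon>(2) M(1) dev] T U X k
      by auto
    moreover have "(2 * real k + 1) / (2 * real n + 1) * (T / ln T) \<le> T / ln T"
      using k X(1) by (intro mult_left_le_one_le) auto
    ultimately show "0 < (\<phi>\<^sub>1 ^^ k) (T + U) - (\<phi>\<^sub>1 ^^ k) T \<and>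
        (\<phi>\<^sub>1 ^^ k) (T + U) - (\<phi>\<^sub>1 ^^ k) T < (2 * real k + 1) / (2 * real n + 1) * (T / ln T) \<and>
        (2 * real k + 1) / (2 * real n + 1) * (T / ln T) \<le> T / ln T"
      using gap_budget[OF X(1,2), of k] k unfolding \<epsilon>_def by auto
  qed
qed

end
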